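(* Let $T\in(0,\infty)$ and let $A_a(t)\in\mathbb{R}^{N\times N}$, $B_a(t)\in\mathbb{R}^{N\times n_w}$, $Q(t)\in\mathbb{S}^N$, $S(t)\in\mathbb{R}^{N\times n_w}$, $R(t)\in\mathbb{S}^{n_w}$ be continuous functions of $t\in[0,T]$. For a differentiable $Y:[0,T]\to\mathbb{S}^N$ and $W:[0,T]\to\mathbb{S}^N$ write $RDE(t,Y)=W$ for $$\dot Y+A_a^\top Y+YA_a+Q-(YB_a+S)R^{-1}(YB_a+S)^\top=W\quad\text{at time }t.$$ Assume: 1. $R(t)\prec0$ for all $t\in[0,T]$; 2. $Y_0:[0,T]\to\mathbb{S}^N$ is differentiable with $Y_0(T)=0$ and $RDE(t,Y_0)=0$ for all $t\in[0,T]$; 3. $(\epsilon_k)_{k\ge1}$ are positive scalars with $\epsilon_k\ge\epsilon_{k+1}$ for all $k$ and $\lim_{k\to\infty}\epsilon_k=0$; 4. $Y_k:[0,T]\to\mathbb{S}^N$ ($k=1,2,\dots$) are differentiable with $Y_k(T)=0$ and $RDE(t,Y_k)=-\epsilon_k I$ for all $t\in[0,T]$. Then $\lim_{k\to\infty}\|Y_k(t)-Y_0(t)\|=0$ for all $t\in[0,T]$.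
   Context: $\mathbb{S}^n$ denotes the set of real symmetric $n\times n$ matrices; $\prec0$ means negative definite; $\|\cdot\|$ is the matrix induced 2-norm. *)

theory Defs
  imports "HOL-Analysis.Analysis"
begin

definition symmetric_mat :: "real^'n^'n \<Rightarrow> bool" where
  "symmetric_mat M \<longleftrightarrow> transpose M = M"

definition neg_def :: "real^'n^'n \<Rightarrow> bool" where
  "neg_def M \<longleftrightarrow> symmetric_mat M \<and> (\<forall>x. x \<noteq> 0 \<longrightarrow> x \<bullet> (M *v x) < 0)"

definition mat_norm2 :: "real^'m^'n \<Rightarrow> real" where
  "mat_norm2 M = onorm (\<lambda>x. M *v x)"

text \<open>Left-hand side of the Riccati differential equation at time t, with the
  time derivative taken within [0,T] (one-sided at the endpoints).\<close>
definition RDE ::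
  "real \<Rightarrow> (real \<Rightarrow> real^'N^'N) \<Rightarrow> (real \<Rightarrow> real^'w^'N) \<Rightarrow> (real \<Rightarrow> real^'N^'N)
    \<Rightarrow> (real \<Rightarrow> real^'w^'N) \<Rightarrow> (real \<Rightarrow> real^'w^'w) \<Rightarrow> real \<Rightarrow> (real \<Rightarrow> real^'N^'N)
    \<Rightarrow> real^'N^'N" where
  "RDE T A B Q S R t Y =
     vector_derivative Y (at t within {0..T}) + transpose (A t) ** Y t + Y t ** A t + Q t
     - (Y t ** B t + S t) ** matrix_inv (R t) ** transpose (Y t ** B t + S t)"

end

theory Submission
  imports Defs
begin

text \<open>Subtracting the Riccati equations for Y_k and Y_0 shows that D_k = Y_k - Y_0 satisfies
  D_k' = -eps_k I + (terms linear in D_k) + D_k B R^-1 B^T D_k. Uniform negative definiteness of R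
  on the compact interval bounds R^-1, so |D_k'| <= eps_k c + L |D_k| + M |D_k|^2 with constants
  independent of k. While |D_k| <= 1 the cubic term is absorbed, so n = |D_k|^2 satisfies
  n' >= -K n - (eps_k c)^2, and integrating backwards from n(T) = 0 gives n <= (eps_k c)^2 e^(KT) / K.
  For small eps_k this bound is below 1, so |D_k| never reaches 1 and the estimate holds on all
  of [0,T]. The estimates use the Frobenius norm of real^'n^'m, which dominates the induced 2-norm.\<close>

lemma power2_norm_vec: "(norm (x :: 'a::real_normed_vector^'n))\<^sup>2 = (\<Sum>i\<in>UNIV. (norm (x $ i))\<^sup>2)"
  by (simp add: norm_vec_def L2_set_def sum_nonneg)

lemma norm_transpose [simp]: "norm (transpose (M :: real^'n^'m)) = norm M"
proof -
  have "(norm (transpose M))\<^sup>2 = (norm M)\<^sup>2"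
    unfolding power2_norm_vec transpose_def by (simp add: sum.swap[of _ "UNIV::'m set"])
  then show ?thesis by simp
qed

lemma norm_matrix_vector_mult_le: "norm ((M :: real^'n^'m) *v x) \<le> norm M * norm x"
proof -
  have "(norm (M *v x))\<^sup>2 = (\<Sum>i\<in>UNIV. (M $ i \<bullet> x)\<^sup>2)"
    by (simp add: power2_norm_vec matrix_vector_mul_component)
  also have "\<dots> \<le> (\<Sum>i\<in>UNIV. (norm (M $ i))\<^sup>2 * (norm x)\<^sup>2)"
  proof (intro sum_mono)
    fix i
    have "\<bar>M $ i \<bullet> x\<bar> \<le> norm (M $ i) * norm x" by (rule Cauchy_Schwarz_ineq2)
    then show "(M $ i \<bullet> x)\<^sup>2 \<le> (norm (M $ i))\<^sup>2 * (norm x)\<^sup>2"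
      by (metis abs_ge_zero power_mono power2_abs power_mult_distrib)
  qed
  also have "\<dots> = (norm M * norm x)\<^sup>2"
    by (simp add: power2_norm_vec[of M] power_mult_distrib sum_distrib_right)
  finally show ?thesis by (simp add: power2_le_iff_abs_le)
qed

lemma norm_matrix_mult_le: "norm ((M :: real^'k^'m) ** (N :: real^'n^'k)) \<le> norm M * norm N"
proof -
  have row: "(M ** N) $ i = transpose N *v M $ i" for i
    by (simp add: matrix_matrix_mult_def matrix_vector_mult_def transpose_def vec_eq_iff mult.commute)
  have "(norm (M ** N))\<^sup>2 = (\<Sum>i\<in>UNIV. (norm (transpose N *v M $ i))\<^sup>2)"
    by (simp only: power2_norm_vec[of "M ** N"] row)
  also have "\<dots> \<le> (\<Sum>i\<in>UNIV. (norm N * norm (M $ i))\<^sup>2)"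
    by (intro sum_mono power_mono) (metis norm_transpose norm_matrix_vector_mult_le, simp)
  also have "\<dots> = (norm M * norm N)\<^sup>2"
    by (simp add: power2_norm_vec[of M] power_mult_distrib sum_distrib_left mult.commute)
  finally show ?thesis by (simp add: power2_le_iff_abs_le)
qed

lemma norm_matrix_mult_bound:
  "norm (M :: real^'k^'m) \<le> a \<Longrightarrow> norm (N :: real^'n^'k) \<le> b \<Longrightarrow> norm (M ** N) \<le> a * b"
  by (meson mult_mono norm_ge_zero norm_matrix_mult_le order_trans)

lemma mat_norm2_nonneg: "0 \<le> mat_norm2 M"
  unfolding mat_norm2_def by (rule onorm_pos_le[OF matrix_vector_mul_bounded_linear])

lemma mat_norm2_le_norm: "mat_norm2 (M :: real^'n^'m) \<le> norm M"
  unfolding mat_norm2_def by (rule onorm_le) (simp add: norm_matrix_vector_mult_le)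

lemma norm_le_sum_columns: "norm (M :: real^'n^'m) \<le> (\<Sum>j\<in>UNIV. norm (M *v axis j 1))"
proof -
  have "norm M = norm (transpose M)" by simp
  also have "\<dots> \<le> (\<Sum>j\<in>UNIV. norm (transpose M $ j))"
    unfolding norm_vec_def by (rule L2_set_le_sum) simp
  finally show ?thesis by (simp add: matrix_vector_mult_basis transpose_def column_def)
qed

lemma matrix_add_rdistrib: "((M :: 'a::semiring_1^'n^'m) + N) ** P = M ** P + N ** P"
  by (simp add: matrix_matrix_mult_def vec_eq_iff algebra_simps sum.distrib)

lemma transpose_add: "transpose ((M :: 'a::plus^'n^'m) + N) = transpose M + transpose N"
  by (simp add: transpose_def vec_eq_iff)

lemma transpose_diff: "transpose ((M :: 'a::ab_group_add^'n^'m) - N) = transpose M - transpose N"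
  by (simp add: transpose_def vec_eq_iff)

lemma compact_continuous_norm_bound:
  assumes "compact K" "continuous_on K f"
  obtains C where "0 < C" "\<forall>t\<in>K. norm (f t) \<le> C"
  using compact_imp_bounded[OF compact_continuous_image[OF assms(2,1)]] that
  by (auto simp: bounded_pos)

lemma has_vector_derivative_at_interior:
  assumes "f differentiable (at s within {a..b})" "s \<in> {a<..<b}"
  shows "(f has_vector_derivative vector_derivative f (at s within {a..b})) (at s)"
  using vector_derivative_works[THEN iffD1, OF assms(1)] assms(2) by (simp add: at_within_Icc_at)

lemma norm_matrix_inv_le:
  fixes M :: "real^'n^'n"
  assumes "0 < c" and coercive: "\<And>x. x \<bullet> (M *v x) \<le> - c * (norm x)\<^sup>2"
  shows "norm (matrix_inv M) \<le> real CARD('n) / c"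
proof -
  have "x = 0" if "M *v x = 0" for x
    using coercive[of x] \<open>0 < c\<close> that by (simp add: mult_le_0_iff)
  then have "invertible M"
    by (simp add: invertible_left_inverse matrix_left_invertible_ker)
  then have M_inv: "M ** matrix_inv M = mat 1"
    unfolding invertible_def matrix_inv_def by (rule someI_ex[THEN conjunct1])
  have inv_le: "norm (matrix_inv M *v y) \<le> norm y / c" for y
  proof -
    define x where "x = matrix_inv M *v y"
    have "M *v x = y" by (simp add: x_def matrix_vector_mul_assoc M_inv)
    then have "c * (norm x)\<^sup>2 \<le> norm x * norm y"
      using coercive[of x] Cauchy_Schwarz_ineq2[of x y] by (simp add: abs_le_iff)
    then have "c * norm x \<le> norm y"
      by (cases "x = 0") (auto simp: power2_eq_square)
    then show ?thesis using \<open>0 < c\<close> by (simp add: x_def field_simps)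
  qed
  have "norm (matrix_inv M) \<le> (\<Sum>j\<in>UNIV. norm (matrix_inv M *v axis j 1))"
    by (rule norm_le_sum_columns)
  also have "\<dots> \<le> (\<Sum>j\<in>(UNIV::'n set). 1 / c)"
    by (intro sum_mono order_trans[OF inv_le]) simp
  finally show ?thesis by simp
qed

lemma uniformly_neg_def_on_compact:
  fixes R :: "'a::topological_space \<Rightarrow> real^'n^'n"
  assumes "compact K" "continuous_on K R" "\<forall>t\<in>K. neg_def (R t)"
  obtains c where "0 < c" "\<forall>t\<in>K. \<forall>x. x \<bullet> (R t *v x) \<le> - c * (norm x)\<^sup>2"
proof (cases "K = {}")
  case True
  then show ?thesis using that[of 1] by simp
next
  case False
  define h where "h p = snd p \<bullet> (R (fst p) *v snd p)" for p :: "'a \<times> (real^'n)"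
  define U where "U = K \<times> sphere (0::real^'n) 1"
  have "compact U" unfolding U_def by (intro compact_Times assms(1) compact_sphere)
  moreover have "U \<noteq> {}"
    using False unfolding U_def by (auto intro: exI[of _ "axis undefined 1"])
  moreover have "continuous_on U h"
  proof -
    have "continuous_on U (\<lambda>p. R (fst p))"
      by (rule continuous_on_compose2[OF assms(2) continuous_on_fst]) (auto simp: U_def)
    then show ?thesis unfolding h_def matrix_vector_mult_def inner_vec_def
      by (intro continuous_intros)
  qed
  ultimately obtain p0 where p0: "p0 \<in> U" "\<forall>p\<in>U. h p \<le> h p0"
    using continuous_attains_sup by blast
  have "fst p0 \<in> K" "snd p0 \<noteq> 0" using p0(1) by (auto simp: U_def mem_Times_iff)
  then have "h p0 < 0" using assms(3) unfolding h_def neg_def_def by blast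
  moreover have "x \<bullet> (R t *v x) \<le> (norm x)\<^sup>2 * h p0" if "t \<in> K" for t x
  proof (cases "x = 0")
    case False
    define u where "u = x /\<^sub>R norm x"
    have "(t, u) \<in> U" using \<open>t \<in> K\<close> False unfolding U_def u_def by simp
    then have "u \<bullet> (R t *v u) \<le> h p0" using p0(2) h_def by fastforce
    moreover have "x \<bullet> (R t *v x) = (norm x)\<^sup>2 * (u \<bullet> (R t *v u))"
      using False by (simp add: u_def matrix_vector_mult_scaleR power2_eq_square field_simps)
    ultimately show ?thesis by (simp add: mult_left_mono)
  qed simp
  ultimately show ?thesis using that[of "- h p0"] by (simp add: mult.commute)
qed

lemma backward_linear_differential_inequality:
  fixes n n' :: "real \<Rightarrow> real"
  assumes "0 < K" "0 \<le> c" "t \<le> T" "continuous_on {t..T} n"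
    and deriv: "\<And>s. s \<in> {t<..<T} \<Longrightarrow> (n has_real_derivative n' s) (at s)"
    and ineq: "\<And>s. s \<in> {t<..<T} \<Longrightarrow> - K * n s - c \<le> n' s"
    and "n T = 0"
  shows "n t \<le> c / K * exp (K * (T - t))"
proof -
  define g where "g s = (n s + c / K) * exp (K * s)" for s
  have "g t \<le> g T"
  proof (rule DERIV_nonneg_imp_increasing_open[OF \<open>t \<le> T\<close>])
    fix s assume s: "t < s" "s < T"
    have "(g has_real_derivative (n' s + K * n s + c) * exp (K * s)) (at s)"
      unfolding g_def using deriv s \<open>0 < K\<close>
      by (auto intro!: derivative_eq_intros simp: field_simps)
    moreover have "0 \<le> (n' s + K * n s + c) * exp (K * s)"
      using ineq[of s] s by simp
    ultimately show "\<exists>y. (g has_real_derivative y) (at s) \<and> 0 \<le> y" by blast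
  qed (use assms(4) in \<open>auto simp: g_def intro!: continuous_intros\<close>)
  then have "(n t + c / K) * exp (K * t) \<le> c / K * exp (K * T)"
    by (simp add: g_def \<open>n T = 0\<close>)
  then have "n t + c / K \<le> c / K * exp (K * T) / exp (K * t)"
    by (subst pos_le_divide_eq) auto
  also have "\<dots> = c / K * exp (K * (T - t))"
    by (simp add: right_diff_distrib exp_diff)
  finally show ?thesis using assms(1,2) by (smt (verit) divide_nonneg_pos)
qed

lemma backward_bootstrap:
  fixes n n' :: "real \<Rightarrow> real"
  assumes "0 < K" "0 \<le> c" "continuous_on {0..T} n"
    and deriv: "\<And>s. s \<in> {0<..<T} \<Longrightarrow> (n has_real_derivative n' s) (at s)"
    and ineq: "\<And>s. s \<in> {0<..<T} \<Longrightarrow> n s \<le> 1 \<Longrightarrow> - K * n s - c \<le> n' s"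
    and "n T = 0" and small: "c / K * exp (K * T) < 1"
  shows "\<forall>t\<in>{0..T}. n t \<le> c / K * exp (K * T)"
proof -
  have bound: "n t \<le> c / K * exp (K * T)"
    if "t \<in> {0..T}" and below: "\<forall>s\<in>{t<..<T}. n s \<le> 1" for t
  proof -
    have "n t \<le> c / K * exp (K * (T - t))"
    proof (rule backward_linear_differential_inequality[where n' = n', OF assms(1,2)])
      show "continuous_on {t..T} n" using that(1) by (intro continuous_on_subset[OF assms(3)]) auto
    qed (use that deriv ineq \<open>n T = 0\<close> in auto)
    also have "\<dots> \<le> c / K * exp (K * T)"
      using that(1) assms(1,2) by (intro mult_left_mono) auto
    finally show ?thesis .
  qed
  have "n s < 1" if "s \<in> {0..T}" for s
  proof (rule ccontr)
    assume "\<not> n s < 1"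
    define U where "U = {s \<in> {0..T}. 1 \<le> n s}"
    have "U \<noteq> {}" "bdd_above U" using that \<open>\<not> n s < 1\<close> by (auto simp: U_def)
    moreover have "closed U"
      unfolding U_def by (rule continuous_on_closed_Collect_le[OF continuous_on_const assms(3)]) simp
    ultimately have "Sup U \<in> U" by (rule closed_contains_Sup)
    \<comment> \<open>after the last time n reaches 1 it stays below 1, so the linear bound applies there\<close>
    moreover have "\<forall>s\<in>{Sup U<..<T}. n s \<le> 1"
    proof
      fix s assume s: "s \<in> {Sup U<..<T}"
      then have "s \<notin> U" using cSup_upper[OF _ \<open>bdd_above U\<close>] by force
      moreover have "s \<in> {0..T}" using s \<open>Sup U \<in> U\<close> by (auto simp: U_def)
      ultimately show "n s \<le> 1" by (auto simp: U_def)
    qed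
    ultimately show False using bound[of "Sup U"] small by (auto simp: U_def)
  qed
  then show ?thesis using bound by (auto simp: less_imp_le)
qed

lemma quadratic_perturbation_bound:
  fixes D D' :: "real \<Rightarrow> 'a::real_inner" and L M \<delta> :: real
  defines "K \<equiv> 1 + 2 * L + 2 * M"
  assumes "0 \<le> L" "0 \<le> M" "continuous_on {0..T} D" "D T = 0"
    and deriv: "\<And>s. s \<in> {0<..<T} \<Longrightarrow> (D has_vector_derivative D' s) (at s)"
    and growth: "\<And>s. s \<in> {0<..<T} \<Longrightarrow> norm (D' s) \<le> \<delta> + L * norm (D s) + M * (norm (D s))\<^sup>2"
    and small: "\<delta>\<^sup>2 / K * exp (K * T) < 1"
  shows "\<forall>t\<in>{0..T}. (norm (D t))\<^sup>2 \<le> \<delta>\<^sup>2 / K * exp (K * T)"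
proof -
  have "\<forall>t\<in>{0..T}. D t \<bullet> D t \<le> \<delta>\<^sup>2 / K * exp (K * T)"
  proof (rule backward_bootstrap)
    show "0 < K" using assms(2,3) by (simp add: K_def)
    show "continuous_on {0..T} (\<lambda>s. D s \<bullet> D s)" using assms(4) by (intro continuous_intros)
    show "((\<lambda>s. D s \<bullet> D s) has_real_derivative 2 * (D s \<bullet> D' s)) (at s)" if "s \<in> {0<..<T}" for s
      using deriv[OF that] unfolding has_vector_derivative_def has_field_derivative_def
      by (auto intro!: derivative_eq_intros simp: inner_commute)
    show "- K * (D s \<bullet> D s) - \<delta>\<^sup>2 \<le> 2 * (D s \<bullet> D' s)" if "s \<in> {0<..<T}" "D s \<bullet> D s \<le> 1" for s
    proof -
      define F where "F = norm (D s)"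
      have "0 \<le> F" "F \<le> 1" using that(2) by (auto simp: F_def dot_square_norm power_le_one_iff)
      have "- (D s \<bullet> D' s) \<le> F * norm (D' s)"
        unfolding F_def using Cauchy_Schwarz_ineq2[of "D s" "D' s"] by (simp add: abs_le_iff)
      also have "\<dots> \<le> F * (\<delta> + L * F + M * F\<^sup>2)"
        using growth[OF that(1)] \<open>0 \<le> F\<close> by (simp add: F_def mult_left_mono)
      finally have "- 2 * (D s \<bullet> D' s) \<le> 2 * F * \<delta> + 2 * L * F\<^sup>2 + 2 * M * F * F\<^sup>2"
        by (simp add: algebra_simps power2_eq_square)
      moreover have "2 * F * \<delta> \<le> \<delta>\<^sup>2 + F\<^sup>2" using sum_squares_bound[of F \<delta>] by (simp add: power2_eq_square)
      moreover have "M * F * F\<^sup>2 \<le> M * F\<^sup>2"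
        using \<open>0 \<le> F\<close> \<open>F \<le> 1\<close> assms(3) by (simp add: mult_left_le_one_le mult.assoc mult_left_mono)
      ultimately show ?thesis by (simp add: K_def F_def dot_square_norm algebra_simps)
    qed
  qed (use \<open>D T = 0\<close> small in auto)
  then show ?thesis by (simp add: dot_square_norm)
qed

lemma quadratic_perturbation_tendsto_zero:
  fixes D D' :: "nat \<Rightarrow> real \<Rightarrow> 'a::real_inner" and L M :: real and \<delta> :: "nat \<Rightarrow> real"
  assumes "\<delta> \<longlonglongrightarrow> 0" "0 \<le> L" "0 \<le> M" "t \<in> {0..T}"
    and cont: "\<And>k. m \<le> k \<Longrightarrow> continuous_on {0..T} (D k)"
    and final: "\<And>k. m \<le> k \<Longrightarrow> D k T = 0"
    and deriv: "\<And>k s. m \<le> k \<Longrightarrow> s \<in> {0<..<T} \<Longrightarrow> (D k has_vector_derivative D' k s) (at s)"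
    and growth: "\<And>k s. m \<le> k \<Longrightarrow> s \<in> {0<..<T} \<Longrightarrow>
      norm (D' k s) \<le> \<delta> k + L * norm (D k s) + M * (norm (D k s))\<^sup>2"
  shows "(\<lambda>k. D k t) \<longlonglongrightarrow> 0"
proof -
  define K where "K = 1 + 2 * L + 2 * M"
  define C where "C = exp (K * T) / K"
  have "0 < C" using assms(2,3) by (simp add: C_def K_def)
  have "(\<lambda>k. (\<delta> k)\<^sup>2 * C) \<longlonglongrightarrow> 0\<^sup>2 * C" by (intro tendsto_intros assms(1))
  then have "\<forall>\<^sub>F k in sequentially. (\<delta> k)\<^sup>2 * C < 1" by (simp add: order_tendstoD(2))
  with eventually_ge_at_top[of m]
  have upper: "\<forall>\<^sub>F k in sequentially. norm (D k t) \<le> \<bar>\<delta> k\<bar> * sqrt C"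
  proof eventually_elim
    case (elim k)
    then have "(norm (D k t))\<^sup>2 \<le> (\<delta> k)\<^sup>2 / K * exp (K * T)"
      using quadratic_perturbation_bound[of L M T "D k" "D' k" "\<delta> k"] assms(2-4) cont final deriv growth
      by (simp add: K_def C_def)
    then have "(norm (D k t))\<^sup>2 \<le> (\<bar>\<delta> k\<bar> * sqrt C)\<^sup>2"
      using \<open>0 < C\<close> by (simp add: C_def power_mult_distrib)
    then show ?case by (rule power2_le_imp_le) (use \<open>0 < C\<close> in simp)
  qed
  have "(\<lambda>k. \<bar>\<delta> k\<bar> * sqrt C) \<longlonglongrightarrow> 0"
    using tendsto_mult_left_zero[OF tendsto_rabs_zero[OF assms(1)]] by simp
  then have "(\<lambda>k. norm (D k t)) \<longlonglongrightarrow> 0"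
    by (intro tendsto_sandwich[OF _ upper tendsto_const]) simp_all
  then show ?thesis by (rule tendsto_norm_zero_cancel)
qed

definition riccati_field ::
  "real^'n^'n \<Rightarrow> real^'w^'n \<Rightarrow> real^'n^'n \<Rightarrow> real^'w^'n \<Rightarrow> real^'w^'w \<Rightarrow> real^'n^'n \<Rightarrow> real^'n^'n" where
  "riccati_field A B Q S Ri Y =
     transpose A ** Y + Y ** A + Q - (Y ** B + S) ** Ri ** transpose (Y ** B + S)"

lemma RDE_eq_riccati_field:
  "RDE T A B Q S R t Y = vector_derivative Y (at t within {0..T})
     + riccati_field (A t) (B t) (Q t) (S t) (matrix_inv (R t)) (Y t)"
  by (simp add: RDE_def riccati_field_def algebra_simps)

lemma riccati_field_diff:
  fixes A Q Y Z :: "real^'n^'n" and B S :: "real^'w^'n" and Ri :: "real^'w^'w"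
  assumes "transpose (Y - Z) = Y - Z"
  defines "D \<equiv> Y - Z" and "P \<equiv> Z ** B + S"
  shows "riccati_field A B Q S Ri Y - riccati_field A B Q S Ri Z
    = transpose A ** D + D ** A - D ** B ** Ri ** transpose P - P ** Ri ** transpose B ** D
      - D ** B ** Ri ** transpose B ** D"
proof -
  have Y: "Y = Z + D" and Z: "Z ** B + S = P" by (simp_all add: D_def P_def)
  have "transpose (P + D ** B) = transpose P + transpose B ** D"
    using assms by (simp add: D_def transpose_add matrix_transpose_mul)
  then have expand: "(P + D ** B) ** Ri ** transpose (P + D ** B) = P ** Ri ** transpose P
      + P ** Ri ** transpose B ** D + D ** B ** Ri ** transpose P + D ** B ** Ri ** transpose B ** D"
    by (simp add: matrix_add_ldistrib matrix_add_rdistrib matrix_mul_assoc)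
  have YBS: "Y ** B + S = P + D ** B"
    by (simp add: Y matrix_add_rdistrib flip: Z)
  show ?thesis
    unfolding riccati_field_def Z YBS expand by (simp add: Y matrix_add_ldistrib matrix_add_rdistrib)
qed

lemma norm_riccati_field_diff_le:
  fixes A Q Y Z :: "real^'n^'n" and B S :: "real^'w^'n" and Ri :: "real^'w^'w"
  assumes "transpose (Y - Z) = Y - Z"
    and "norm A \<le> a" "norm B \<le> b" "norm Ri \<le> r" "norm (Z ** B + S) \<le> p"
  shows "norm (riccati_field A B Q S Ri Y - riccati_field A B Q S Ri Z)
    \<le> (2 * a + 2 * b * r * p) * norm (Y - Z) + b\<^sup>2 * r * (norm (Y - Z))\<^sup>2"
proof -
  define D where "D = Y - Z"
  define P where "P = Z ** B + S"
  have transposed: "norm (transpose A) \<le> a" "norm (transpose B) \<le> b" "norm (transpose P) \<le> p"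
    using assms by (simp_all add: P_def)
  have "norm (riccati_field A B Q S Ri Y - riccati_field A B Q S Ri Z)
    \<le> norm (transpose A ** D) + norm (D ** A) + norm (D ** B ** Ri ** transpose P)
      + norm (P ** Ri ** transpose B ** D) + norm (D ** B ** Ri ** transpose B ** D)"
    unfolding riccati_field_diff[OF assms(1)] D_def[symmetric] P_def[symmetric]
    by (smt (verit) norm_triangle_ineq norm_triangle_ineq4)
  also have "\<dots> \<le> a * norm D + norm D * a + norm D * b * r * p + p * r * b * norm D
      + norm D * b * r * b * norm D"
    using assms(2-5) transposed by (intro add_mono norm_matrix_mult_bound order_refl) (simp_all add: P_def)
  also have "\<dots> = (2 * a + 2 * b * r * p) * norm D + b\<^sup>2 * r * (norm D)\<^sup>2"
    by (simp add: algebra_simps power2_eq_square)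
  finally show ?thesis by (simp add: D_def)
qed

lemma norm_RDE_derivative_diff_le:
  assumes "symmetric_mat (Y t)" "symmetric_mat (Z t)"
    and "norm (A t) \<le> a" "norm (B t) \<le> b" "norm (matrix_inv (R t)) \<le> r"
    and "norm (Z t ** B t + S t) \<le> p"
  shows "norm (vector_derivative Y (at t within {0..T}) - vector_derivative Z (at t within {0..T}))
    \<le> norm (RDE T A B Q S R t Y - RDE T A B Q S R t Z)
      + (2 * a + 2 * b * r * p) * norm (Y t - Z t) + b\<^sup>2 * r * (norm (Y t - Z t))\<^sup>2"
proof -
  let ?F = "riccati_field (A t) (B t) (Q t) (S t) (matrix_inv (R t))"
  have "transpose (Y t - Z t) = Y t - Z t"
    using assms(1,2) by (simp add: symmetric_mat_def transpose_diff)
  then have "norm (?F (Y t) - ?F (Z t)) \<le> (2 * a + 2 * b * r * p) * norm (Y t - Z t) + b\<^sup>2 * r * (norm (Y t - Z t))\<^sup>2"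
    using assms(3-6) by (rule norm_riccati_field_diff_le)
  moreover have "vector_derivative Y (at t within {0..T}) - vector_derivative Z (at t within {0..T})
      = (RDE T A B Q S R t Y - RDE T A B Q S R t Z) - (?F (Y t) - ?F (Z t))"
    by (simp add: RDE_eq_riccati_field)
  ultimately show ?thesis by (smt (verit) norm_triangle_ineq4)
qed

lemma RDE_difference_growth_bound:
  fixes A Q Z :: "real \<Rightarrow> real^'n^'n" and B S :: "real \<Rightarrow> real^'w^'n" and R :: "real \<Rightarrow> real^'w^'w"
  assumes "continuous_on {0..T} A" "continuous_on {0..T} B" "continuous_on {0..T} S"
    and "continuous_on {0..T} R" "\<forall>t\<in>{0..T}. neg_def (R t)" "continuous_on {0..T} Z"
  obtains L M where "0 \<le> L" "0 \<le> M"
    "\<And>Y t. t \<in> {0..T} \<Longrightarrow> symmetric_mat (Y t) \<Longrightarrow> symmetric_mat (Z t) \<Longrightarrow>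
      norm (vector_derivative Y (at t within {0..T}) - vector_derivative Z (at t within {0..T}))
      \<le> norm (RDE T A B Q S R t Y - RDE T A B Q S R t Z)
        + L * norm (Y t - Z t) + M * (norm (Y t - Z t))\<^sup>2"
proof -
  obtain a where "0 < a" and a: "\<forall>t\<in>{0..T}. norm (A t) \<le> a"
    using compact_continuous_norm_bound[OF compact_Icc assms(1)] .
  obtain b where "0 < b" and b: "\<forall>t\<in>{0..T}. norm (B t) \<le> b"
    using compact_continuous_norm_bound[OF compact_Icc assms(2)] .
  obtain p where "0 < p" and p: "\<forall>t\<in>{0..T}. norm (Z t ** B t + S t) \<le> p"
  proof (rule compact_continuous_norm_bound[OF compact_Icc])
    show "continuous_on {0..T} (\<lambda>t. Z t ** B t + S t)"
      using assms(2,3,6) unfolding matrix_matrix_mult_def by (intro continuous_intros)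
  qed
  obtain c where "0 < c" and c: "\<forall>t\<in>{0..T}. \<forall>x. x \<bullet> (R t *v x) \<le> - c * (norm x)\<^sup>2"
    using uniformly_neg_def_on_compact[OF compact_Icc assms(4,5)] .
  define r where "r = real CARD('w) / c"
  have r: "\<forall>t\<in>{0..T}. norm (matrix_inv (R t)) \<le> r"
  proof
    fix t assume "t \<in> {0..T}"
    with c show "norm (matrix_inv (R t)) \<le> r"
      unfolding r_def by (intro norm_matrix_inv_le[OF \<open>0 < c\<close>]) auto
  qed
  show ?thesis
  proof (rule that[of "2 * a + 2 * b * r * p" "b\<^sup>2 * r"])
    show "0 \<le> 2 * a + 2 * b * r * p" "0 \<le> b\<^sup>2 * r"
      using \<open>0 < a\<close> \<open>0 < b\<close> \<open>0 < c\<close> \<open>0 < p\<close> by (simp_all add: r_def)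
  qed (use a b p r in \<open>auto intro: norm_RDE_derivative_diff_le\<close>)
qed

theorem lemmaA2:
  fixes T :: real
    and A :: "real \<Rightarrow> real^'N^'N" and B :: "real \<Rightarrow> real^'w^'N"
    and Q :: "real \<Rightarrow> real^'N^'N" and S :: "real \<Rightarrow> real^'w^'N"
    and R :: "real \<Rightarrow> real^'w^'w"
    and Y0 :: "real \<Rightarrow> real^'N^'N" and Y :: "nat \<Rightarrow> real \<Rightarrow> real^'N^'N"
    and eps :: "nat \<Rightarrow> real"
  assumes T_pos: "0 < T"
    and contA: "continuous_on {0..T} A" and contB: "continuous_on {0..T} B"
    and contQ: "continuous_on {0..T} Q" and contS: "continuous_on {0..T} S"
    and contR: "continuous_on {0..T} R"
    and symQ: "\<forall>t\<in>{0..T}. symmetric_mat (Q t)"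
    and symR: "\<forall>t\<in>{0..T}. symmetric_mat (R t)"
    and negR: "\<forall>t\<in>{0..T}. neg_def (R t)"
    and Y0_sym: "\<forall>t\<in>{0..T}. symmetric_mat (Y0 t)"
    and Y0_diff: "\<forall>t\<in>{0..T}. Y0 differentiable (at t within {0..T})"
    and Y0_T: "Y0 T = 0"
    and Y0_RDE: "\<forall>t\<in>{0..T}. RDE T A B Q S R t Y0 = 0"
    and eps_pos: "\<forall>k\<ge>1. 0 < eps k"
    and eps_mono: "\<forall>k\<ge>1. eps (Suc k) \<le> eps k"
    and eps_lim: "eps \<longlonglongrightarrow> 0"
    and Yk_sym: "\<forall>k\<ge>1. \<forall>t\<in>{0..T}. symmetric_mat (Y k t)"
    and Yk_diff: "\<forall>k\<ge>1. \<forall>t\<in>{0..T}. Y k differentiable (at t within {0..T})"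
    and Yk_T: "\<forall>k\<ge>1. Y k T = 0"
    and Yk_RDE: "\<forall>k\<ge>1. \<forall>t\<in>{0..T}. RDE T A B Q S R t (Y k) = - (eps k *\<^sub>R mat 1)"
  shows "\<forall>t\<in>{0..T}. (\<lambda>k. mat_norm2 (Y k t - Y0 t)) \<longlonglongrightarrow> 0"
proof
  \<comment> \<open>Q cancels in the difference of the two equations.\<close>
  have cont_Y0: "continuous_on {0..T} Y0" and cont_Yk: "\<And>k. k \<ge> 1 \<Longrightarrow> continuous_on {0..T} (Y k)"
    using Y0_diff Yk_diff
    by (auto simp: continuous_on_eq_continuous_within intro: differentiable_imp_continuous_within)
  obtain L M where "0 \<le> L" "0 \<le> M" and growth:
    "\<And>Z t. t \<in> {0..T} \<Longrightarrow> symmetric_mat (Z t) \<Longrightarrow> symmetric_mat (Y0 t) \<Longrightarrow>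
      norm (vector_derivative Z (at t within {0..T}) - vector_derivative Y0 (at t within {0..T}))
      \<le> norm (RDE T A B Q S R t Z - RDE T A B Q S R t Y0)
        + L * norm (Z t - Y0 t) + M * (norm (Z t - Y0 t))\<^sup>2"
    using RDE_difference_growth_bound[OF contA contB contS contR negR cont_Y0] by blast
  fix t assume "t \<in> {0..T}"
  have "(\<lambda>k. Y k t - Y0 t) \<longlonglongrightarrow> 0"
  proof (rule quadratic_perturbation_tendsto_zero[where m = 1
        and \<delta> = "\<lambda>k. eps k * norm (mat 1 :: real^'N^'N)" and D' = "\<lambda>k s. vector_derivative (Y k) (at s within {0..T}) - vector_derivative Y0 (at s within {0..T})"])
    fix k :: nat and s assume "1 \<le> k" "s \<in> {0<..<T}"
    moreover have "0 < eps k" using eps_pos \<open>1 \<le> k\<close> by simp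
    ultimately show "norm (vector_derivative (Y k) (at s within {0..T}) - vector_derivative Y0 (at s within {0..T}))
        \<le> eps k * norm (mat 1 :: real^'N^'N) + L * norm (Y k s - Y0 s) + M * (norm (Y k s - Y0 s))\<^sup>2"
      using growth[of s "Y k"] Yk_RDE Y0_RDE Yk_sym Y0_sym by simp
  qed (use tendsto_mult_left_zero[OF eps_lim] \<open>0 \<le> L\<close> \<open>0 \<le> M\<close> \<open>t \<in> {0..T}\<close> cont_Y0 cont_Yk Y0_T Yk_T
        Y0_diff Yk_diff in \<open>auto intro!: continuous_intros has_vector_derivative_diff has_vector_derivative_at_interior\<close>)
  then show "(\<lambda>k. mat_norm2 (Y k t - Y0 t)) \<longlonglongrightarrow> 0"
    by (intro tendsto_sandwich[OF _ _ tendsto_const tendsto_norm_zero])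
      (simp_all add: mat_norm2_nonneg mat_norm2_le_norm)
qed

end
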